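(* Let $m$ be a positive integer and let $\delta$ be a positive divisor of $\lambda(m)$. Then $$\prod_{\substack{a\in U_m\\ \mathrm{ind}_m(a)=\delta}}a\equiv\begin{cases}-1\pmod m,&\text{if }\delta=2\text{ and }m\text{ has a primitive root,}\\ 1\pmod m,&\text{otherwise.}\end{cases}$$
   Context: $U_m$ denotes the set of invertible residue classes in $\mathbb{Z}/m\mathbb{Z}$ (the product runs over one representative of each such class). For $a$ coprime to $m$, $\mathrm{ind}_m(a)$ is the multiplicative order of $a$ modulo $m$, i.e. the smallest positive $k$ with $a^k\equiv 1\pmod m$. $\lambda(m)$ is the Carmichael function: the smallest $k>0$ such that $a^k\equiv 1\pmod m$ for all $a\in U_m$. A primitive root modulo $m$ is an element of $U_m$ of order $\phi(m)$, where $\phi$ is Euler's totient function. *)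

theory Defs
  imports "HOL-Number_Theory.Number_Theory"
begin

end

theory Submission
  imports Defs
begin

(* Pair every unit with its inverse: for \<delta> \<ge> 3 no element of order \<delta> is its own inverse, so
   the product is 1. For \<delta> = 2, let H be the group of square roots of 1, i.e. 1 and the
   elements of order 2. Pairing x with a x shows \<Prod>H \<equiv> a^(|H|/2) for every a of order 2.
   If m has a primitive root, -1 is the only element of order 2. Otherwise the Chinese
   remainder theorem (or b = 2^(k-1) + 1 modulo 2^k) yields an element b of order 2 other
   than -1, and the pairing applied to -1, b and -b gives
   \<Prod>H \<equiv> (-1)^(|H|/2) b^(|H|/2) \<equiv> (\<Prod>H)^2 \<equiv> ((-1)^2)^(|H|/2) = 1. *)

lemma prod_involution_cong_power:
  fixes g :: "'b \<Rightarrow> 'a :: unique_euclidean_semiring"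
  assumes "finite X"
    and "\<And>x. x \<in> X \<Longrightarrow> h x \<in> X" "\<And>x. x \<in> X \<Longrightarrow> h (h x) = x"
    and "\<And>x. x \<in> X \<Longrightarrow> h x \<noteq> x"
    and "\<And>x. x \<in> X \<Longrightarrow> [g x * g (h x) = c] (mod m)"
  shows "[(\<Prod>x\<in>X. g x) = c ^ (card X div 2)] (mod m)"
  using assms
proof (induction X rule: finite_psubset_induct)
  case (psubset X)
  show ?case
  proof (cases "X = {}")
    case False
    then obtain x where x: "x \<in> X"
      by blast
    define Y where "Y = X - {x, h x}"
    have hx: "h x \<in> X" "h x \<noteq> x"
      using psubset.prems x by auto
    have "[(\<Prod>y\<in>Y. g y) = c ^ (card Y div 2)] (mod m)"
    proof (rule psubset.IH)
      show "Y \<subset> X"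
        using x by (auto simp: Y_def)
      fix y assume "y \<in> Y"
      hence y: "y \<in> X" "y \<noteq> x" "y \<noteq> h x"
        by (auto simp: Y_def)
      with x psubset.prems(2) have "h (h y) = y" "h (h x) = x"
        by auto
      with y psubset.prems(1) show "h y \<in> Y"
        by (auto simp: Y_def)
    qed (use psubset.prems in \<open>auto simp: Y_def\<close>)
    hence "[g x * g (h x) * (\<Prod>y\<in>Y. g y) = c * c ^ (card Y div 2)] (mod m)"
      using psubset.prems(4)[OF x] by (rule cong_mult[rotated])
    moreover have "X = insert x (insert (h x) Y)" "x \<notin> insert (h x) Y" "h x \<notin> Y"
      using x hx by (auto simp: Y_def)
    ultimately show ?thesis
      using psubset.hyps by (simp add: mult.assoc)
  qed simp
qed

lemma cong_inverse_unique:
  fixes a b c :: "'a :: unique_euclidean_semiring"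
  assumes "[a * b = 1] (mod m)" "[b * c = 1] (mod m)"
  shows "[a = c] (mod m)"
proof -
  have "[a = a * (b * c)] (mod m)"
    using cong_scalar_left[OF assms(2), of a] by (simp add: cong_sym)
  also have "[a * (b * c) = 1 * c] (mod m)"
    using cong_scalar_right[OF assms(1), of c] by (simp add: mult.assoc)
  finally show ?thesis
    by simp
qed

lemma totatives_cong_imp_eq:
  fixes m x y :: nat
  assumes "x \<in> totatives m" "y \<in> totatives m" "[x = y] (mod m)"
  shows "x = y"
proof (cases "m > 1")
  case True
  with assms show ?thesis
    using totatives_less cong_less_modulus_unique_nat by blast
next
  case False
  with assms show ?thesis
    by (cases m) auto
qed

lemma mod_in_totatives: "m > 1 \<Longrightarrow> coprime m x \<Longrightarrow> x mod m \<in> totatives m"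
  using power_in_totatives[of m x 1] by simp

lemma prod_elements_with_ord_ge_3_cong_1:
  fixes m \<delta> :: nat
  assumes m: "m > 1" and \<delta>: "\<delta> \<ge> 3"
  shows "[\<Prod>{a \<in> totatives m. ord m a = \<delta>} = 1] (mod m)"
proof -
  define S where "S = {a \<in> totatives m. ord m a = \<delta>}"
  define inv_mod where "inv_mod x = x ^ (\<delta> - 1) mod m" for x
  have inv_mod_right: "[x * inv_mod x = 1] (mod m)" if "x \<in> S" for x
  proof -
    have "x * x ^ (\<delta> - 1) = x ^ \<delta>"
      using \<delta> by (simp flip: power_Suc)
    moreover have "[x ^ \<delta> = 1] (mod m)"
      using that ord[of x m] by (simp add: S_def)
    ultimately show ?thesis
      by (simp add: inv_mod_def cong_def mod_mult_right_eq)
  qed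
  have inv_mod_in: "inv_mod x \<in> S" if "x \<in> S" for x
  proof -
    have "coprime m x"
      using that \<delta> ord_gt_0_iff[of m x] by (simp add: S_def)
    moreover have "gcd (\<delta> - 1) \<delta> = 1"
      using \<delta> by (simp add: gcd_diff2_nat)
    ultimately show ?thesis
      using that m by (simp add: S_def inv_mod_def ord_power power_in_totatives)
  qed
  have "[\<Prod>S = 1 ^ (card S div 2)] (mod m)"
  proof (rule prod_involution_cong_power[where h = inv_mod and g = "\<lambda>x. x"])
    fix x assume x: "x \<in> S"
    show "inv_mod x \<in> S"
      using inv_mod_in x .
    show "[x * inv_mod x = 1] (mod m)"
      using inv_mod_right x .
    have "[inv_mod (inv_mod x) = x] (mod m)"
      using cong_inverse_unique[OF inv_mod_right[OF x] inv_mod_right[OF inv_mod_in[OF x]]]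
      by (rule cong_sym)
    then show "inv_mod (inv_mod x) = x"
      using totatives_cong_imp_eq inv_mod_in[OF inv_mod_in[OF x]] x by (auto simp: S_def)
    show "inv_mod x \<noteq> x"
    proof
      assume "inv_mod x = x"
      hence "[x ^ 2 = 1] (mod m)"
        using inv_mod_right[OF x] by (simp add: power2_eq_square)
      hence "\<delta> dvd 2"
        using x by (simp add: S_def ord_divides')
      with \<delta> show False
        by (auto dest: dvd_imp_le)
    qed
  qed (simp add: S_def)
  thus ?thesis
    by (simp add: S_def)
qed

lemma ord_minus_one_eq_2:
  fixes m :: nat
  assumes "m \<ge> 3"
  shows "ord m (m - 1) = 2"
proof -
  have "[int (m - 1) = -1] (mod int m)"
    using assms by (simp add: cong_iff_dvd_diff)
  hence "[int ((m - 1)^2) = int 1] (mod int m)"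
    using cong_pow[of "int (m - 1)" "-1" "int m" 2] by simp
  hence "[(m - 1)^2 = 1] (mod m)"
    by (simp only: cong_int_iff)
  moreover have "[m - 1 \<noteq> 1] (mod m)"
    using assms by (simp add: cong_def)
  ultimately show ?thesis
    by (simp add: ord_eq_2_iff)
qed

lemma ord_eq_2_if_sqrt_one:
  fixes m b :: nat
  assumes "1 < m" "b < m" "b \<noteq> 1" "[b^2 = 1] (mod m)"
  shows "b \<in> totatives m" "ord m b = 2"
proof -
  show ord: "ord m b = 2"
    using assms by (simp add: ord_eq_2_iff cong_def)
  hence "coprime m b"
    using ord_gt_0_iff[of m b] by simp
  with assms show "b \<in> totatives m"
    by (auto simp: in_totatives_iff coprime_commute intro: Nat.gr0I)
qed

lemma ex_ord_2_ne_minus_one_twopow: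
  assumes "k \<ge> 3"
  shows "\<exists>b\<in>totatives (2^k). ord (2^k) b = 2 \<and> b \<noteq> 2^k - 1"
proof -
  obtain j where k: "k = j + 3"
    using assms by (metis add.commute le_Suc_ex)
  define t :: nat where "t = 2^(j + 1)"
  have t: "2^k = 4 * t" "t \<ge> 2"
    using power_increasing[of 1 "j + 1" "2::nat"] by (simp_all add: k t_def power_add)
  have "(2 * t + 1)^2 = 2^k * (t + 1) + 1"
    by (simp add: t(1) power2_eq_square algebra_simps)
  hence "[(2 * t + 1)^2 = 1] (mod 2^k)"
    by (metis cong_def mod_mult_self4)
  thus ?thesis
    using ord_eq_2_if_sqrt_one[of "2^k" "2 * t + 1"] t by auto
qed

lemma ex_ord_2_ne_minus_one_coprime_mult:
  fixes q n :: nat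
  assumes "coprime q n" "q \<ge> 3" "n \<ge> 3"
  shows "\<exists>b\<in>totatives (q * n). ord (q * n) b = 2 \<and> b \<noteq> q * n - 1"
proof -
  have q: "[(q - 1)^2 = 1] (mod q)" "[q - 1 \<noteq> 1] (mod q)"
    using ord_minus_one_eq_2[of q] assms by (simp_all add: ord_eq_2_iff)
  have n: "[(n - 1)^2 = 1] (mod n)" "[n - 1 \<noteq> 1] (mod n)"
    using ord_minus_one_eq_2[of n] assms by (simp_all add: ord_eq_2_iff)
  obtain x where x: "[x = 1] (mod q)" "[x = n - 1] (mod n)"
    using binary_chinese_remainder_nat[OF assms(1)] by blast
  define b where "b = x mod (q * n)"
  have bq: "[b = 1] (mod q)"
    using x(1) by (simp add: b_def cong_def mod_mod_cancel)
  have bn: "[b = n - 1] (mod n)"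
    using x(2) by (simp add: b_def cong_def mod_mod_cancel)
  have "[b^2 = 1] (mod q)"
    using cong_pow[OF bq, of 2] by simp
  moreover have "[b^2 = 1] (mod n)"
    using cong_pow[OF bn, of 2] n(1) by (rule cong_trans)
  ultimately have "[b^2 = 1] (mod q * n)"
    using assms(1) by (rule coprime_cong_mult_nat)
  moreover have "b \<noteq> 1"
    using bn n(2) by (auto simp: cong_sym_eq)
  moreover have "b \<noteq> q * n - 1"
  proof
    assume "b = q * n - 1"
    moreover have "[q * n - 1 = q - 1] (mod q)"
      using assms by (intro cong_diff_nat) (auto simp: cong_def)
    ultimately show False
      using bq q(2) by (metis cong_sym cong_trans)
  qed
  moreover have "b < q * n"
    using assms by (simp add: b_def)
  moreover have "1 < q * n"
    using assms by (intro less_1_mult) auto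
  ultimately show ?thesis
    using ord_eq_2_if_sqrt_one[of "q * n" b] by blast
qed

lemma ex_ord_2_ne_minus_one_if_no_primroot:
  fixes m :: nat
  assumes "m \<ge> 3" "\<nexists>g. residue_primroot m g"
  shows "\<exists>b\<in>totatives m. ord m b = 2 \<and> b \<noteq> m - 1"
proof -
  have not_cyclic: "m \<notin> cyclic_moduli"
    using assms(2) residue_primroot_iff_in_cyclic_moduli by blast
  show ?thesis
  proof (cases "\<exists>k. m = 2 ^ k")
    case True
    then obtain k where k: "m = 2 ^ k"
      by blast
    with not_cyclic have "k \<notin> {0, 1, 2}"
      by (auto simp: cyclic_moduli_def)
    with k show ?thesis
      using ex_ord_2_ne_minus_one_twopow[of k] by simp
  next
    case False
    have "m \<noteq> 0"
      using assms(1) by simp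
    with False have "\<exists>p\<in>prime_factors m. p \<noteq> 2"
      using Ex_other_prime_factor[of m 2] by auto
    from divide_out_primepow_ex[OF \<open>m \<noteq> 0\<close> this]
    obtain p k n where p: "p \<noteq> 2" "prime p" "p dvd m" "\<not> p dvd n" "k > 0"
      and m: "m = p ^ k * n"
      by metis
    have "odd p"
      using p primes_dvd_imp_eq[of 2 p] by auto
    have "m \<in> cyclic_moduli" if "n = 1"
      using that m p \<open>odd p\<close> by (auto simp: cyclic_moduli_def)
    moreover have "m \<in> cyclic_moduli" if "n = 2"
      using that m p \<open>odd p\<close> unfolding cyclic_moduli_def by (auto simp: mult.commute)
    ultimately have "n \<notin> {0, 1, 2}"
      using not_cyclic \<open>m \<noteq> 0\<close> m by auto
    moreover have "p ^ k \<ge> 3"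
      using p \<open>odd p\<close> prime_ge_2_nat[of p] power_increasing[of 1 k p]
      by (auto simp: le_Suc_eq)
    moreover have "coprime (p ^ k) n"
      using p prime_imp_coprime by auto
    ultimately show ?thesis
      using ex_ord_2_ne_minus_one_coprime_mult[of "p ^ k" n] m by auto
  qed
qed

lemma elements_with_ord_2_primroot:
  fixes m g :: nat
  assumes m: "m \<ge> 3" and g: "residue_primroot m g"
  shows "{a \<in> totatives m. ord m a = 2} = {m - 1}"
proof -
  have gen: "bij_betw (\<lambda>i. g ^ i mod m) {..<totient m} (totatives m)"
    using residue_primroot_is_generator[of m g] assms by simp
  have unique: "y = g ^ (totient m div 2) mod m" if y: "y \<in> totatives m" "ord m y = 2" for y
  proof -
    obtain i where i: "i < totient m" "y = g ^ i mod m"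
      using gen y(1) unfolding bij_betw_def by auto
    have "[g ^ (i * 2) = 1] (mod m)"
      using y(2) ord_divides[of y 2 m] i(2) by (simp add: cong_def power_mod power_mult)
    hence "totient m dvd i * 2"
      using g by (simp add: ord_divides' residue_primroot_def)
    then obtain t where t: "i * 2 = totient m * t"
      by blast
    have "i \<noteq> 0"
      using i y(2) m by (intro notI) simp
    moreover have "totient m * t < totient m * 2"
      using t i(1) by linarith
    ultimately have "t = 1"
      using t by (cases t) auto
    with t have "i = totient m div 2"
      by simp
    with i(2) show ?thesis
      by simp
  qed
  have minus_one: "m - 1 \<in> totatives m" "ord m (m - 1) = 2"
    using ord_minus_one_eq_2[OF m] minus_one_in_totatives[of m] m by auto
  show ?thesis
    using unique[OF minus_one] minus_one by (auto dest: unique)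
qed

definition square_roots_of_one :: "nat \<Rightarrow> nat set" where
  "square_roots_of_one m = {x \<in> totatives m. [x^2 = 1] (mod m)}"

lemma prod_square_roots_of_one_cong_power:
  fixes m a :: nat
  assumes a: "a \<in> totatives m" "ord m a = 2"
  shows "[\<Prod>(square_roots_of_one m) = a ^ (card (square_roots_of_one m) div 2)] (mod m)"
proof (rule prod_involution_cong_power[where h = "\<lambda>x. a * x mod m" and g = "\<lambda>x. x"])
  have "m \<noteq> 0" "m \<noteq> 1"
    using a by (auto simp: in_totatives_iff)
  hence m: "m > 1"
    by linarith
  have a2: "[a^2 = 1] (mod m)" "[a \<noteq> 1] (mod m)"
    using a(2) by (simp_all add: ord_eq_2_iff)
  fix x assume "x \<in> square_roots_of_one m"
  hence x: "x \<in> totatives m" "[x^2 = 1] (mod m)"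
    by (simp_all add: square_roots_of_one_def)
  have coprime: "coprime m a" "coprime m x"
    using a x by (simp_all add: in_totatives_iff coprime_commute)
  have "[(a * x mod m)^2 = a^2 * x^2] (mod m)"
    by (simp add: cong_def power_mod power_mult_distrib)
  also have "[a^2 * x^2 = 1 * 1] (mod m)"
    using a2(1) x(2) by (rule cong_mult)
  finally show "a * x mod m \<in> square_roots_of_one m"
    using mod_in_totatives[of m "a * x"] m coprime by (simp add: square_roots_of_one_def)
  have "[a * (a * x mod m) = a^2 * x] (mod m)"
    by (simp add: cong_def mod_mult_right_eq power2_eq_square mult.assoc)
  also have "[a^2 * x = 1 * x] (mod m)"
    using a2(1) by (rule cong_scalar_right)
  finally show "a * (a * x mod m) mod m = x"
    using totatives_cong_imp_eq[of "a * (a * x mod m) mod m" m x] mod_in_totatives[of m]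
      m coprime x(1) by (simp add: cong_def)
  show "a * x mod m \<noteq> x"
  proof
    assume "a * x mod m = x"
    hence "[a * x = 1 * x] (mod m)"
      using totatives_less[OF x(1) m] by (simp add: cong_def)
    hence "[a = 1] (mod m)"
      using cong_mult_rcancel_nat[of x m a 1] coprime(2) by (simp add: coprime_commute)
    with a2(2) show False ..
  qed
  have "[x * (a * x mod m) = a * x^2] (mod m)"
    by (simp add: cong_def mod_mult_right_eq power2_eq_square ac_simps)
  also have "[a * x^2 = a * 1] (mod m)"
    using x(2) by (rule cong_scalar_left)
  finally show "[x * (a * x mod m) = a] (mod m)"
    by simp
qed (simp add: square_roots_of_one_def)

lemma prod_elements_with_ord_2_cong_1:
  fixes m b :: nat
  assumes m: "m \<ge> 3" and b: "b \<in> totatives m" "ord m b = 2" "b \<noteq> m - 1"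
  shows "[\<Prod>{x \<in> totatives m. ord m x = 2} = 1] (mod m)"
proof -
  define H where "H = square_roots_of_one m"
  define a where "a = m - 1"
  define c where "c = a * b mod m"
  define n where "n = card H div 2"
  have a: "a \<in> totatives m" "ord m a = 2"
    using ord_minus_one_eq_2 minus_one_in_totatives m by (simp_all add: a_def)
  have sq: "[a^2 = 1] (mod m)" "[b^2 = 1] (mod m)"
    using a(2) b(2) by (simp_all add: ord_eq_2_iff)
  have "[c^2 = a^2 * b^2] (mod m)"
    by (simp add: c_def cong_def power_mod power_mult_distrib)
  also have "[a^2 * b^2 = 1 * 1] (mod m)"
    using sq by (rule cong_mult)
  finally have c_sq: "[c^2 = 1] (mod m)"
    by simp
  have "c \<noteq> 1"
  proof
    assume "c = 1"
    hence "[a * b = 1] (mod m)"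
      using m by (simp add: c_def cong_def)
    moreover have "[a * a = 1] (mod m)"
      using sq(1) by (simp add: power2_eq_square)
    ultimately have "[a = b] (mod m)"
      using cong_inverse_unique by blast
    with b a show False
      using totatives_cong_imp_eq by (auto simp: a_def)
  qed
  with c_sq m have c: "c \<in> totatives m" "ord m c = 2"
    using ord_eq_2_if_sqrt_one[of m c] by (simp_all add: c_def)
  have Pa: "[\<Prod>H = a ^ n] (mod m)" and Pb: "[\<Prod>H = b ^ n] (mod m)"
    and Pc: "[\<Prod>H = c ^ n] (mod m)"
    using prod_square_roots_of_one_cong_power a b c by (simp_all add: H_def n_def)
  have "[\<Prod>H = c ^ n] (mod m)"
    by (rule Pc)
  also have "[c ^ n = a ^ n * b ^ n] (mod m)"
    by (simp add: c_def cong_def power_mod power_mult_distrib)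
  also have "[a ^ n * b ^ n = \<Prod>H * \<Prod>H] (mod m)"
    using Pa Pb by (intro cong_mult) (simp_all add: cong_sym)
  also have "[\<Prod>H * \<Prod>H = (a^2) ^ n] (mod m)"
    using cong_mult[OF Pa Pa] by (simp add: power2_eq_square power_mult_distrib)
  also have "[(a^2) ^ n = 1] (mod m)"
    using cong_pow[OF sq(1), of n] by simp
  finally have "[\<Prod>H = 1] (mod m)" .
  moreover have "{x \<in> totatives m. ord m x = 2} = H - {1}"
    using m totatives_less[of _ m]
    by (auto simp: H_def square_roots_of_one_def ord_eq_2_iff cong_def)
  moreover have "1 \<in> H"
    using m by (simp add: H_def square_roots_of_one_def)
  hence "\<Prod>H = \<Prod>(H - {1})"
    using prod.remove[of H 1 "\<lambda>x. x"] by (simp add: H_def square_roots_of_one_def)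
  ultimately show ?thesis
    by simp
qed

lemma prod_elements_with_ord_2_cong:
  fixes m :: nat
  assumes "m \<ge> 3"
  shows "[int (\<Prod>{a \<in> totatives m. ord m a = 2}) =
          (if \<exists>g. residue_primroot m g then -1 else 1)] (mod int m)"
proof (cases "\<exists>g. residue_primroot m g")
  case True
  then have "{a \<in> totatives m. ord m a = 2} = {m - 1}"
    using elements_with_ord_2_primroot assms by blast
  with True assms show ?thesis
    by (simp add: cong_iff_dvd_diff)
next
  case False
  then obtain b where "b \<in> totatives m" "ord m b = 2" "b \<noteq> m - 1"
    using ex_ord_2_ne_minus_one_if_no_primroot assms by blast
  with assms have "[\<Prod>{a \<in> totatives m. ord m a = 2} = 1] (mod m)"
    by (intro prod_elements_with_ord_2_cong_1)
  hence "[int (\<Prod>{a \<in> totatives m. ord m a = 2}) = int 1] (mod int m)"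
    by (simp only: cong_int_iff)
  with False show ?thesis
    by simp
qed

theorem theorem1p5:
  fixes m \<delta> :: nat
  assumes "m > 0" and "\<delta> > 0" and "\<delta> dvd Carmichael m"
  shows "[int (\<Prod>a\<in>{a \<in> totatives m. ord m a = \<delta>}. a) =
          (if \<delta> = 2 \<and> (\<exists>g. residue_primroot m g) then -1 else 1)] (mod int m)"
proof -
  define P where "P = (\<Prod>a\<in>{a \<in> totatives m. ord m a = \<delta>}. a)"
  have "m \<noteq> 2 \<or> \<delta> \<noteq> 2"
    using assms(3) by auto
  then consider "m = 1" | "\<delta> = 1" | "\<delta> = 2" "m \<ge> 3" | "\<delta> \<ge> 3" "m > 1"
    using assms(1,2) by linarith
  hence "[int P = (if \<delta> = 2 \<and> (\<exists>g. residue_primroot m g) then -1 else 1)] (mod int m)"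
  proof cases
    case 2
    then show ?thesis
      using elements_with_ord_1 assms(1) by (simp add: P_def)
  next
    case 3
    then show ?thesis
      using prod_elements_with_ord_2_cong[of m] by (simp add: P_def)
  next
    case 4
    then have "[P = 1] (mod m)"
      unfolding P_def by (intro prod_elements_with_ord_ge_3_cong_1)
    hence "[int P = int 1] (mod int m)"
      by (simp only: cong_int_iff)
    with 4 show ?thesis
      by simp
  qed simp
  then show ?thesis
    by (simp only: P_def)
qed

end
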